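(* Let $H=(V,E)$ be a $k$-uniform $k$-partite hypergraph with vertex partition $V=V_1\sqcup\dots\sqcup V_k$. If there exists an index $i$ such that every vertex $v\in V_i$ lies in exactly two edges of $E$, then the Graver basis of $I_H$ is the unique minimal generating set of $I_H$.
   Context: A hypergraph $H=(V,E)$ has finite vertex set $V$ and a set $E$ of edges, each a nonempty subset of $V$ (no repeated edges). It is $k$-uniform if every edge has exactly $k$ elements, and a $k$-uniform hypergraph is $k$-partite if $V$ can be partitioned into $k$ disjoint subsets $V_1,\dots,V_k$ such that each edge contains exactly one vertex from each $V_i$. For a field $K$, the toric ideal $I_H$ is the kernel of $\phi_H: K[t_e : e\in E]\to K[x_v : v\in V]$, $t_e\mapsto\prod_{v\in e}x_v$. The Graver basis of $I_H$ is the set of primitive binomials of $I_H$, where a binomial $u-v\in I_H$ ($u,v$ monomials) is primitive if there is no other binomial $u'-v'\in I_H$ with $u'\mid u$ and $v'\mid v$. "Unique minimal generating set" means the Graver basis generates $I_H$ minimally and every minimal binomial generating set of $I_H$ coincides with it up to signs. *)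

theory Defs
  imports Main "HOL-Library.Poly_Mapping"
begin

text \<open>Hypergraph H = (V, E): vertex set V = UNIV of a finite type 'v, edges indexed
  injectively by a finite type 'e via E :: 'e => 'v set.  Variables t_e of the
  polynomial ring K[t_e : e in E] are indexed by 'e; x_v by 'v.
  Polynomials over a field 'k in variables indexed by 'a are elements of
  ('a =>0 nat) =>0 'k (monomial exponent vector => coefficient).\<close>

definition hypergraph :: "('e::finite \<Rightarrow> 'v::finite set) \<Rightarrow> bool" where
  "hypergraph E \<longleftrightarrow> inj E \<and> (\<forall>e. E e \<noteq> {})"

definition uniform_partite ::
  "nat \<Rightarrow> ('e::finite \<Rightarrow> 'v::finite set) \<Rightarrow> (nat \<Rightarrow> 'v set) \<Rightarrow> bool" where
  "uniform_partite k E P \<longleftrightarrow>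
     (\<forall>e. card (E e) = k) \<and>
     (\<forall>i<k. \<forall>j<k. i \<noteq> j \<longrightarrow> P i \<inter> P j = {}) \<and>
     (\<Union>i<k. P i) = UNIV \<and>
     (\<forall>e. \<forall>i<k. card (E e \<inter> P i) = 1)"

text \<open>Exponent vector (in the x_v) of phi_H applied to the monomial t^a.\<close>
definition toric_deg :: "('e::finite \<Rightarrow> 'v::finite set) \<Rightarrow> ('e \<Rightarrow>\<^sub>0 nat) \<Rightarrow> ('v \<Rightarrow>\<^sub>0 nat)" where
  "toric_deg E a = (\<Sum>e\<in>UNIV. \<Sum>v\<in>E e. Poly_Mapping.single v (Poly_Mapping.lookup a e))"

text \<open>The K-algebra homomorphism phi_H : t_e |-> prod_{v in e} x_v.\<close>
definition toric_map ::
  "('e::finite \<Rightarrow> 'v::finite set) \<Rightarrow> (('e \<Rightarrow>\<^sub>0 nat) \<Rightarrow>\<^sub>0 'k::field) \<Rightarrow> (('v \<Rightarrow>\<^sub>0 nat) \<Rightarrow>\<^sub>0 'k)" where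
  "toric_map E p = (\<Sum>a\<in>Poly_Mapping.keys p. Poly_Mapping.single (toric_deg E a) (Poly_Mapping.lookup p a))"

definition toric_ideal ::
  "('e::finite \<Rightarrow> 'v::finite set) \<Rightarrow> (('e \<Rightarrow>\<^sub>0 nat) \<Rightarrow>\<^sub>0 'k::field) set" where
  "toric_ideal E = {p. toric_map E p = 0}"

definition mono :: "('e \<Rightarrow>\<^sub>0 nat) \<Rightarrow> (('e \<Rightarrow>\<^sub>0 nat) \<Rightarrow>\<^sub>0 'k::field)" where
  "mono a = Poly_Mapping.single a 1"

definition binomials :: "(('e \<Rightarrow>\<^sub>0 nat) \<Rightarrow>\<^sub>0 'k::field) set" where
  "binomials = {mono a - mono b | a b. a \<noteq> b}"

definition primitive_pair ::
  "('e::finite \<Rightarrow> 'v::finite set) \<Rightarrow> ('e \<Rightarrow>\<^sub>0 nat) \<Rightarrow> ('e \<Rightarrow>\<^sub>0 nat) \<Rightarrow> 'k::field itself \<Rightarrow> bool" where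
  "primitive_pair E a b (_::'k itself) \<longleftrightarrow>
     a \<noteq> b \<and> (mono a - mono b :: ('e \<Rightarrow>\<^sub>0 nat) \<Rightarrow>\<^sub>0 'k) \<in> toric_ideal E \<and>
     \<not> (\<exists>a' b'. a' \<noteq> b' \<and> (a', b') \<noteq> (a, b) \<and>
            (mono a' - mono b' :: ('e \<Rightarrow>\<^sub>0 nat) \<Rightarrow>\<^sub>0 'k) \<in> toric_ideal E \<and>
            (mono a' :: ('e \<Rightarrow>\<^sub>0 nat) \<Rightarrow>\<^sub>0 'k) dvd mono a \<and>
            (mono b' :: ('e \<Rightarrow>\<^sub>0 nat) \<Rightarrow>\<^sub>0 'k) dvd mono b)"

definition graver_basis ::
  "('e::finite \<Rightarrow> 'v::finite set) \<Rightarrow> (('e \<Rightarrow>\<^sub>0 nat) \<Rightarrow>\<^sub>0 'k::field) set" where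
  "graver_basis E = {mono a - mono b | a b. primitive_pair E a b TYPE('k)}"

definition ideal_gen :: "'a::comm_ring_1 set \<Rightarrow> 'a set" where
  "ideal_gen S = {x. \<exists>F r. finite F \<and> F \<subseteq> S \<and> x = (\<Sum>s\<in>F. r s * s)}"

definition minimal_generating_set :: "'a::comm_ring_1 set \<Rightarrow> 'a set \<Rightarrow> bool" where
  "minimal_generating_set B I \<longleftrightarrow> ideal_gen B = I \<and> (\<forall>B' \<subset> B. ideal_gen B' \<noteq> I)"

text \<open>G (closed under sign) generates I minimally (up to signs), and every minimal
  binomial generating set of I coincides with G up to signs.\<close>
definition unique_minimal_generating_set :: "'a::comm_ring_1 set \<Rightarrow> 'a set \<Rightarrow> 'a set \<Rightarrow> bool" where
  "unique_minimal_generating_set G I Bin \<longleftrightarrow>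
     ideal_gen G = I \<and>
     (\<forall>g\<in>G. ideal_gen (G - {g, - g}) \<noteq> I) \<and>
     (\<forall>B. B \<subseteq> Bin \<and> minimal_generating_set B I \<longrightarrow>
          (\<forall>b\<in>B. b \<in> G \<or> - b \<in> G) \<and> (\<forall>g\<in>G. g \<in> B \<or> - g \<in> B))"

end

theory Submission
  imports Defs "HOL.Modules"
begin

text \<open>
  A binomial \<open>t\<^sup>a - t\<^sup>b\<close> of \<open>I\<^sub>H\<close> lies in every binomial generating set of \<open>I\<^sub>H\<close> (up to sign)
  as soon as its fibre \<open>{c. \<phi>\<^sub>H(t\<^sup>c) = \<phi>\<^sub>H(t\<^sup>a)}\<close> is just \<open>{a, b}\<close> and \<open>a, b\<close> have disjoint
  supports: no other binomial of the ideal can move \<open>t\<^sup>a\<close>.  Since the Graver basis always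
  generates \<open>I\<^sub>H\<close>, it is then the unique minimal generating set once every primitive binomial
  has this property.  That is where the hypothesis enters: every edge \<open>e\<close> meets \<open>V\<^sub>i\<close> in a
  vertex \<open>v\<close> lying on exactly one further edge \<open>e'\<close>, so \<open>c\<^sub>e + c\<^sub>e' = a\<^sub>e + a\<^sub>e' = b\<^sub>e + b\<^sub>e'\<close>
  for every \<open>c\<close> in the fibre; with disjoint supports this gives \<open>c \<le> a + b\<close>, and then
  \<open>t\<^sup>a\<^sup>-\<^sup>c - t\<^sup>c\<^sup>-\<^sup>a\<close> is a binomial of \<open>I\<^sub>H\<close> dividing \<open>t\<^sup>a - t\<^sup>b\<close> termwise, so primitivity forces
  \<open>c \<in> {a, b}\<close>.
\<close>

type_synonym ('e, 'k) poly = "('e \<Rightarrow>\<^sub>0 nat) \<Rightarrow>\<^sub>0 'k"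

text \<open>A commutative ring as a module over itself: its submodules are the ideals, and
  \<open>ideal_gen\<close> is the span.\<close>
interpretation rm: module "(*) :: 'a::comm_ring_1 \<Rightarrow> 'a \<Rightarrow> 'a"
  by standard (simp_all add: algebra_simps)

lemma ideal_gen_eq_span: "ideal_gen S = rm.span S"
  unfolding ideal_gen_def rm.span_explicit by auto

lemma ideal_gen_superset: "S \<subseteq> ideal_gen S"
  unfolding ideal_gen_eq_span by (rule rm.span_superset)

lemma minimal_generating_set_subset_up_to_sign:
  fixes G B :: "'a::comm_ring_1 set"
  assumes gen: "ideal_gen G = I" and B: "minimal_generating_set B I"
    and G_in_B: "\<forall>g\<in>G. g \<in> B \<or> - g \<in> B"
  shows "\<forall>b\<in>B. b \<in> G \<or> - b \<in> G"
proof -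
  define B\<^sub>0 where "B\<^sub>0 = {b\<in>B. b \<in> G \<or> - b \<in> G}"
  have "B\<^sub>0 \<subseteq> B"
    unfolding B\<^sub>0_def by blast
  have "G \<subseteq> rm.span B\<^sub>0"
  proof
    fix g assume "g \<in> G"
    then have "g \<in> B\<^sub>0 \<or> - g \<in> B\<^sub>0"
      using G_in_B unfolding B\<^sub>0_def by auto
    then show "g \<in> rm.span B\<^sub>0"
      by (metis minus_minus rm.span_base rm.span_neg)
  qed
  then have "rm.span G \<subseteq> rm.span B\<^sub>0"
    by (rule rm.span_minimal[OF _ rm.subspace_span])
  moreover have "rm.span B\<^sub>0 \<subseteq> rm.span B"
    using \<open>B\<^sub>0 \<subseteq> B\<close> by (rule rm.span_mono)
  moreover have "rm.span G = I" "rm.span B = I"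
    using gen B unfolding minimal_generating_set_def ideal_gen_eq_span by simp_all
  ultimately have "ideal_gen B\<^sub>0 = I"
    unfolding ideal_gen_eq_span by blast
  then have "\<not> B\<^sub>0 \<subset> B"
    using B unfolding minimal_generating_set_def by blast
  then show ?thesis
    using \<open>B\<^sub>0 \<subseteq> B\<close> unfolding B\<^sub>0_def by blast
qed

lemma unique_minimal_generating_setI:
  fixes G I Bin :: "'a::comm_ring_1 set"
  assumes gen: "ideal_gen G = I" and G_Bin: "G \<subseteq> Bin"
    and indispensable: "\<And>g S. g \<in> G \<Longrightarrow> S \<subseteq> Bin \<inter> I \<Longrightarrow> g \<in> ideal_gen S \<Longrightarrow> g \<in> S \<or> - g \<in> S"
  shows "unique_minimal_generating_set G I Bin"
proof -
  have G_I: "G \<subseteq> I"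
    using gen ideal_gen_superset by blast
  have "ideal_gen (G - {g, - g}) \<noteq> I" if "g \<in> G" for g
  proof
    assume gen': "ideal_gen (G - {g, - g}) = I"
    have "G - {g, - g} \<subseteq> Bin \<inter> I"
      using G_Bin G_I by blast
    moreover have "g \<in> ideal_gen (G - {g, - g})"
      using G_I \<open>g \<in> G\<close> gen' by blast
    ultimately have "g \<in> G - {g, - g} \<or> - g \<in> G - {g, - g}"
      by (rule indispensable[OF \<open>g \<in> G\<close>])
    then show False
      by blast
  qed
  moreover have "(\<forall>g\<in>G. g \<in> B \<or> - g \<in> B) \<and> (\<forall>b\<in>B. b \<in> G \<or> - b \<in> G)"
    if B: "B \<subseteq> Bin" "minimal_generating_set B I" for B
  proof -
    have gen_B: "ideal_gen B = I"
      using B(2) unfolding minimal_generating_set_def by blast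
    then have "B \<subseteq> Bin \<inter> I"
      using B(1) ideal_gen_superset by blast
    then have G_in_B: "\<forall>g\<in>G. g \<in> B \<or> - g \<in> B"
      using indispensable G_I gen_B by blast
    then show ?thesis
      using minimal_generating_set_subset_up_to_sign[OF gen B(2)] by blast
  qed
  ultimately show ?thesis
    unfolding unique_minimal_generating_set_def using gen by blast
qed

lemma poly_mapping_expansion:
  "p = (\<Sum>a\<in>Poly_Mapping.keys p. Poly_Mapping.single a (Poly_Mapping.lookup p a))"
  by (rule poly_mapping_eqI) (simp add: lookup_sum lookup_single when_def in_keys_iff)

lemma toric_deg_add: "toric_deg E (a + b) = toric_deg E a + toric_deg E b"
  by (simp add: toric_deg_def lookup_add single_add sum.distrib)

lemma lookup_toric_deg:
  fixes E :: "'e::finite \<Rightarrow> 'v::finite set"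
  shows "Poly_Mapping.lookup (toric_deg E a) v = (\<Sum>e\<in>{e. v \<in> E e}. Poly_Mapping.lookup a e)"
proof -
  have "Poly_Mapping.lookup (toric_deg E a) v =
      (\<Sum>e\<in>UNIV. if v \<in> E e then Poly_Mapping.lookup a e else 0)"
    unfolding toric_deg_def lookup_sum by (intro sum.cong refl) (simp add: lookup_single when_def)
  then show ?thesis
    by (simp add: sum.If_cases)
qed

lemma lookup_toric_map:
  fixes p :: "('e::finite, 'k::field) poly"
  assumes "finite S" "Poly_Mapping.keys p \<subseteq> S"
  shows "Poly_Mapping.lookup (toric_map E p) d =
    (\<Sum>a\<in>S. if toric_deg E a = d then Poly_Mapping.lookup p a else 0)"
proof -
  have "Poly_Mapping.lookup (toric_map E p) d =
      (\<Sum>a\<in>Poly_Mapping.keys p. if toric_deg E a = d then Poly_Mapping.lookup p a else 0)"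
    unfolding toric_map_def lookup_sum by (intro sum.cong refl) (simp add: lookup_single when_def)
  also have "\<dots> = (\<Sum>a\<in>S. if toric_deg E a = d then Poly_Mapping.lookup p a else 0)"
    using assms by (intro sum.mono_neutral_left) (auto simp: in_keys_iff)
  finally show ?thesis .
qed

lemma toric_map_add: "toric_map E (p + q) = toric_map E p + toric_map E q"
proof (rule poly_mapping_eqI)
  fix d
  let ?S = "Poly_Mapping.keys p \<union> Poly_Mapping.keys q"
  have keys: "Poly_Mapping.keys (p + q) \<subseteq> ?S"
    by (rule keys_add)
  show "Poly_Mapping.lookup (toric_map E (p + q)) d =
      Poly_Mapping.lookup (toric_map E p + toric_map E q) d"
    unfolding lookup_add lookup_toric_map[OF _ keys, simplified]
      lookup_toric_map[of ?S p, simplified] lookup_toric_map[of ?S q, simplified]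
    by (auto simp: lookup_add sum.distrib[symmetric] intro!: sum.cong)
qed

lemma toric_map_zero: "toric_map E 0 = 0"
  by (simp add: toric_map_def)

lemma toric_map_diff: "toric_map E (p - q) = toric_map E p - toric_map E q"
  by (metis add_diff_cancel diff_add_cancel toric_map_add)

lemma toric_map_single: "toric_map E (Poly_Mapping.single a c) = Poly_Mapping.single (toric_deg E a) c"
  by (cases "c = 0") (simp_all add: toric_map_def)

lemma toric_map_sum: "toric_map E (sum f A) = (\<Sum>x\<in>A. toric_map E (f x))"
  by (induction A rule: infinite_finite_induct) (simp_all add: toric_map_zero toric_map_add)

lemma toric_map_mult: "toric_map E (p * q) = toric_map E p * toric_map E q"
proof -
  have "p * q = (\<Sum>a\<in>Poly_Mapping.keys p. \<Sum>b\<in>Poly_Mapping.keys q.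
      Poly_Mapping.single (a + b) (Poly_Mapping.lookup p a * Poly_Mapping.lookup q b))"
    by (subst poly_mapping_expansion[of p], subst poly_mapping_expansion[of q])
      (simp add: sum_product mult_single)
  then have "toric_map E (p * q) = (\<Sum>a\<in>Poly_Mapping.keys p. \<Sum>b\<in>Poly_Mapping.keys q.
      Poly_Mapping.single (toric_deg E a + toric_deg E b) (Poly_Mapping.lookup p a * Poly_Mapping.lookup q b))"
    by (simp add: toric_map_sum toric_map_single toric_deg_add)
  also have "\<dots> = toric_map E p * toric_map E q"
    unfolding toric_map_def by (simp add: sum_product mult_single)
  finally show ?thesis .
qed

lemma subspace_toric_ideal: "rm.subspace (toric_ideal E :: ('e::finite, 'k::field) poly set)"
  unfolding rm.subspace_def toric_ideal_def
  by (simp add: toric_map_zero toric_map_add toric_map_mult)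

lemma mono_diff_in_toric_ideal_iff:
  "(mono a - mono b :: ('e::finite, 'k::field) poly) \<in> toric_ideal E \<longleftrightarrow> toric_deg E a = toric_deg E b"
proof -
  have "Poly_Mapping.single x (1::'k) = Poly_Mapping.single y 1 \<longleftrightarrow> x = y" for x y :: "'v \<Rightarrow>\<^sub>0 nat"
    by (metis lookup_single_eq lookup_single_not_eq zero_neq_one)
  then show ?thesis
    unfolding toric_ideal_def mono_def by (simp add: toric_map_diff toric_map_single)
qed

lemma mono_mult: "(mono a :: ('e, 'k::field) poly) * mono b = mono (a + b)"
  unfolding mono_def by (simp add: mult_single)

lemma mono_dvd_iff: "(mono a' :: ('e, 'k::field) poly) dvd mono a \<longleftrightarrow> (\<exists>c. a = a' + c)"
proof
  assume "(mono a' :: ('e, 'k) poly) dvd mono a"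
  then obtain q where "(mono a :: ('e, 'k) poly) = mono a' * q"
    by (auto simp: dvd_def)
  then have "a \<in> Poly_Mapping.keys ((mono a' :: ('e, 'k) poly) * q)"
    by (metis keys_single insertI1 mono_def one_neq_zero)
  then show "\<exists>c. a = a' + c"
    using keys_mult[of "mono a' :: ('e, 'k) poly" q] by (auto simp: mono_def)
qed (metis dvdI mono_mult)

lemma mono_add_diff_mono_add:
  "(mono (a + c) - mono (b + d) :: ('e, 'k::field) poly) =
    mono c * (mono a - mono b) + mono b * (mono c - mono d)"
  by (simp add: right_diff_distrib mono_mult add.commute)

lemma primitive_pair_iff:
  "primitive_pair E a b TYPE('k::field) \<longleftrightarrow>
    a \<noteq> b \<and> toric_deg E a = toric_deg E b \<and>
    (\<forall>a' b' c d. a' \<noteq> b' \<and> toric_deg E a' = toric_deg E b' \<and> a = a' + c \<and> b = b' + d \<longrightarrow>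
      a' = a \<and> b' = b)"
  unfolding primitive_pair_def mono_diff_in_toric_ideal_iff[where 'k='k] mono_dvd_iff[where 'k='k]
  by blast

lemma primitive_pairD:
  assumes "primitive_pair E a b TYPE('k::field)"
  shows "a \<noteq> b" and "toric_deg E a = toric_deg E b"
    and "\<And>a' b'. a' \<noteq> b' \<Longrightarrow> toric_deg E a' = toric_deg E b' \<Longrightarrow> (\<exists>c. a = a' + c) \<Longrightarrow>
           (\<exists>d. b = b' + d) \<Longrightarrow> a' = a \<and> b' = b"
  using assms unfolding primitive_pair_iff by blast+

definition total_degree :: "('e::finite \<Rightarrow>\<^sub>0 nat) \<Rightarrow> nat" where
  "total_degree a = (\<Sum>e\<in>UNIV. Poly_Mapping.lookup a e)"

lemma total_degree_add: "total_degree (a + b) = total_degree a + total_degree b"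
  by (simp add: total_degree_def lookup_add sum.distrib)

lemma total_degree_pos: "a \<noteq> 0 \<Longrightarrow> total_degree a > 0"
  unfolding total_degree_def by (metis finite_UNIV gr0I lookup_zero poly_mapping_eqI sum_eq_0_iff UNIV_I)

lemma mono_diff_in_span_graver_basis:
  fixes E :: "'e::finite \<Rightarrow> 'v::finite set"
  assumes "toric_deg E a = toric_deg E b"
  shows "(mono a - mono b :: ('e, 'k::field) poly) \<in> rm.span (graver_basis E)"
  using assms
proof (induction "total_degree a + total_degree b" arbitrary: a b rule: less_induct)
  case less
  consider "a = b" | "primitive_pair E a b TYPE('k)" | "a \<noteq> b" "\<not> primitive_pair E a b TYPE('k)"
    by blast
  then show ?case
  proof cases
    case 1
    then show ?thesis by (simp add: rm.span_zero)
  next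
    case 2
    then show ?thesis
      unfolding graver_basis_def by (blast intro: rm.span_base)
  next
    case 3
    then obtain a' b' c d where factor: "a' \<noteq> b'" "(a', b') \<noteq> (a, b)" "toric_deg E a' = toric_deg E b'"
      "a = a' + c" "b = b' + d"
      using less.prems unfolding primitive_pair_iff by blast
    have "c \<noteq> 0 \<or> d \<noteq> 0" "a' \<noteq> 0 \<or> b' \<noteq> 0"
      using factor by auto
    then have "total_degree a' + total_degree b' < total_degree a + total_degree b"
      and "total_degree c + total_degree d < total_degree a + total_degree b"
      using factor total_degree_pos[of a'] total_degree_pos[of b'] total_degree_pos[of c]
        total_degree_pos[of d]
      by (auto simp: total_degree_add)
    moreover have "toric_deg E c = toric_deg E d"
      using less.prems factor by (simp add: toric_deg_add)
    ultimately have "(mono a' - mono b' :: ('e, 'k) poly) \<in> rm.span (graver_basis E)"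
      and "(mono c - mono d :: ('e, 'k) poly) \<in> rm.span (graver_basis E)"
      using less.hyps factor(3) by blast+
    then show ?thesis
      unfolding factor(4,5) mono_add_diff_mono_add by (simp add: rm.span_add rm.span_scale)
  qed
qed

lemma toric_ideal_key_same_degree:
  assumes "p \<in> toric_ideal E" "a \<in> Poly_Mapping.keys p"
  shows "\<exists>b\<in>Poly_Mapping.keys p. b \<noteq> a \<and> toric_deg E b = toric_deg E a"
proof (rule ccontr)
  assume "\<not> ?thesis"
  then have "Poly_Mapping.lookup (toric_map E p) (toric_deg E a) = Poly_Mapping.lookup p a"
    using assms(2) by (subst lookup_toric_map[OF finite_keys order_refl])
      (subst sum.remove[OF finite_keys assms(2)], auto intro!: sum.neutral)
  then show False
    using assms by (simp add: toric_ideal_def in_keys_iff)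
qed

text \<open>Subtract \<open>p\<^sub>a (t\<^sup>a - t\<^sup>b)\<close> for two keys \<open>a \<noteq> b\<close> of the same degree: this removes the key \<open>a\<close>.\<close>
lemma toric_ideal_subset_span_binomials:
  "toric_ideal E \<subseteq>
    rm.span {mono a - mono b :: ('e::finite, 'k::field) poly | a b. toric_deg E a = toric_deg E b}"
  (is "_ \<subseteq> rm.span ?B")
proof
  fix p :: "('e, 'k) poly"
  assume "p \<in> toric_ideal E"
  then show "p \<in> rm.span ?B"
  proof (induction "card (Poly_Mapping.keys p)" arbitrary: p rule: less_induct)
    case less
    show ?case
    proof (cases "p = 0")
      case True
      then show ?thesis by (simp add: rm.span_zero)
    next
      case False
      then obtain a where a: "a \<in> Poly_Mapping.keys p"
        by (metis keys_eq_empty ex_in_conv)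
      then obtain b where b: "b \<in> Poly_Mapping.keys p" "b \<noteq> a" "toric_deg E b = toric_deg E a"
        using toric_ideal_key_same_degree[OF less.prems] by blast
      define q :: "('e, 'k) poly" where
        "q = Poly_Mapping.single 0 (Poly_Mapping.lookup p a) * (mono a - mono b)"
      have q_span: "q \<in> rm.span ?B"
        unfolding q_def using b(3)[symmetric] by (intro rm.span_scale rm.span_base) blast
      have "q \<in> toric_ideal E"
        unfolding q_def
        by (intro rm.subspace_scale[OF subspace_toric_ideal]) (simp add: mono_diff_in_toric_ideal_iff b(3))
      then have "p - q \<in> toric_ideal E"
        by (rule rm.subspace_diff[OF subspace_toric_ideal less.prems])
      moreover have "card (Poly_Mapping.keys (p - q)) < card (Poly_Mapping.keys p)"
      proof (rule psubset_card_mono[OF finite_keys])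
        have "q = Poly_Mapping.single a (Poly_Mapping.lookup p a) -
            Poly_Mapping.single b (Poly_Mapping.lookup p a)"
          unfolding q_def mono_def by (simp add: right_diff_distrib mult_single)
        then have "Poly_Mapping.keys (p - q) \<subseteq> Poly_Mapping.keys p - {a}"
          using b by (auto simp: in_keys_iff lookup_minus lookup_single when_def split: if_splits)
        then show "Poly_Mapping.keys (p - q) \<subset> Poly_Mapping.keys p"
          using a by blast
      qed
      ultimately have "p - q \<in> rm.span ?B"
        using less.hyps by blast
      then have "(p - q) + q \<in> rm.span ?B"
        using q_span by (rule rm.span_add)
      then show ?thesis
        by simp
    qed
  qed
qed

lemma ideal_gen_graver_basis:
  "ideal_gen (graver_basis E :: ('e::finite, 'k::field) poly set) = toric_ideal E"
proof
  show "ideal_gen (graver_basis E) \<subseteq> (toric_ideal E :: ('e, 'k) poly set)"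
    unfolding ideal_gen_eq_span graver_basis_def primitive_pair_def
    by (intro rm.span_minimal subspace_toric_ideal) blast
  have "{mono a - mono b :: ('e, 'k) poly | a b. toric_deg E a = toric_deg E b} \<subseteq>
      rm.span (graver_basis E)"
    using mono_diff_in_span_graver_basis by blast
  then have "rm.span {mono a - mono b :: ('e, 'k) poly | a b. toric_deg E a = toric_deg E b} \<subseteq>
      rm.span (graver_basis E)"
    by (rule rm.span_minimal[OF _ rm.subspace_span])
  then show "toric_ideal E \<subseteq> ideal_gen (graver_basis E :: ('e, 'k) poly set)"
    unfolding ideal_gen_eq_span using toric_ideal_subset_span_binomials by blast
qed

lemma primitive_pair_disjoint_support:
  assumes "primitive_pair E a b TYPE('k::field)"
  shows "Poly_Mapping.lookup a e = 0 \<or> Poly_Mapping.lookup b e = 0"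
proof (rule ccontr)
  assume shared: "\<not> ?thesis"
  let ?t = "Poly_Mapping.single e 1"
  have a: "a = (a - ?t) + ?t" and b: "b = (b - ?t) + ?t"
    using shared
    by (auto intro!: poly_mapping_eqI simp: lookup_add lookup_minus lookup_single when_def)
  have "toric_deg E (a - ?t) = toric_deg E (b - ?t)"
    using primitive_pairD(2)[OF assms] a b by (metis add_right_cancel toric_deg_add)
  moreover have "a - ?t \<noteq> b - ?t"
    using primitive_pairD(1)[OF assms] a b by metis
  ultimately have "a - ?t = a"
    using primitive_pairD(3)[OF assms] a b by blast
  then show False
    using a by (metis add_cancel_left_right lookup_single_eq single_zero zero_neq_one)
qed

text \<open>The witness is the binomial \<open>t\<^sup>a\<^sup>-\<^sup>c - t\<^sup>c\<^sup>-\<^sup>a\<close>; here \<open>a - (a - c)\<close> is the pointwise minimum of \<open>a\<close> and \<open>c\<close>.\<close>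
lemma primitive_pair_fibre_bounded:
  assumes prim: "primitive_pair E a b TYPE('k::field)"
    and deg: "toric_deg E c = toric_deg E a"
    and bounded: "\<And>e. Poly_Mapping.lookup c e \<le> Poly_Mapping.lookup a e + Poly_Mapping.lookup b e"
  shows "c = a \<or> c = b"
proof (rule ccontr)
  assume c: "\<not> (c = a \<or> c = b)"
  have a: "a = (a - c) + (a - (a - c))" and c_eq: "c = (c - a) + (a - (a - c))"
    by (auto intro!: poly_mapping_eqI simp: lookup_add lookup_minus)
  have b: "b = (c - a) + (b - (c - a))"
  proof (rule poly_mapping_eqI)
    fix e
    show "Poly_Mapping.lookup b e = Poly_Mapping.lookup ((c - a) + (b - (c - a))) e"
      using bounded[of e] by (simp add: lookup_add lookup_minus)
  qed
  have "toric_deg E (a - c) = toric_deg E (c - a)"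
    using deg arg_cong[OF a, of "toric_deg E"] arg_cong[OF c_eq, of "toric_deg E"]
    by (simp add: toric_deg_add)
  moreover have "a - c \<noteq> c - a"
    using a c_eq c by metis
  ultimately have "a - c = a" and "c - a = b"
    using primitive_pairD(3)[OF prim] a b by blast+
  then have "c = b"
    using a c_eq by (metis add_cancel_left_right add_left_cancel)
  then show False
    using c by simp
qed

lemma primitive_pair_fibre:
  fixes E :: "'e::finite \<Rightarrow> 'v::finite set"
  assumes two: "\<And>e. \<exists>v\<in>E e. card {e. v \<in> E e} = 2"
    and prim: "primitive_pair E a b TYPE('k::field)"
    and deg: "toric_deg E c = toric_deg E a"
  shows "c = a \<or> c = b"
proof (rule primitive_pair_fibre_bounded[OF prim deg])
  fix e
  obtain v where v: "v \<in> E e" "card {e. v \<in> E e} = 2"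
    using two by blast
  then obtain e\<^sub>1 e\<^sub>2 where "{x. v \<in> E x} = {e\<^sub>1, e\<^sub>2}" "e\<^sub>1 \<noteq> e\<^sub>2"
    by (auto simp: card_2_iff)
  moreover have "e \<in> {x. v \<in> E x}"
    using v by simp
  ultimately obtain e' where e': "{x. v \<in> E x} = {e, e'}" "e \<noteq> e'"
    by auto
  have at_v: "Poly_Mapping.lookup (toric_deg E x) v = Poly_Mapping.lookup x e + Poly_Mapping.lookup x e'" for x
    unfolding lookup_toric_deg e'(1) using e'(2) by simp
  have "Poly_Mapping.lookup c e + Poly_Mapping.lookup c e' = Poly_Mapping.lookup a e + Poly_Mapping.lookup a e'"
    and "Poly_Mapping.lookup a e + Poly_Mapping.lookup a e' = Poly_Mapping.lookup b e + Poly_Mapping.lookup b e'"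
    using at_v[of a] at_v[of b] at_v[of c] deg primitive_pairD(2)[OF prim] by simp_all
  then show "Poly_Mapping.lookup c e \<le> Poly_Mapping.lookup a e + Poly_Mapping.lookup b e"
    using primitive_pair_disjoint_support[OF prim, of e] primitive_pair_disjoint_support[OF prim, of e']
    by linarith
qed

lemma fibre_pair_factor:
  assumes fibre: "\<And>c. toric_deg E c = toric_deg E a \<Longrightarrow> c = a \<or> c = b"
    and disjoint: "\<And>e. Poly_Mapping.lookup a e = 0 \<or> Poly_Mapping.lookup b e = 0"
    and "a' \<noteq> b'" "toric_deg E a' = toric_deg E b'" "a = y + a'"
  shows "a' = a \<and> b' = b"
proof -
  have "toric_deg E (y + b') = toric_deg E a"
    using assms(4,5) by (simp add: toric_deg_add)
  then have b: "b = y + b'"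
    using fibre assms(3,5) by (metis add_left_cancel)
  have "y = 0"
  proof (rule poly_mapping_eqI)
    fix e
    show "Poly_Mapping.lookup y e = Poly_Mapping.lookup 0 e"
      using disjoint[of e] arg_cong[OF assms(5), of "\<lambda>x. Poly_Mapping.lookup x e"]
        arg_cong[OF b, of "\<lambda>x. Poly_Mapping.lookup x e"]
      by (auto simp: lookup_add)
  qed
  then show ?thesis
    using b assms(5) by simp
qed

text \<open>Compare the coefficients of \<open>t\<^sup>a\<close>: some \<open>r\<^sub>s s\<close> with \<open>s = t\<^sup>a\<^sup>' - t\<^sup>b\<^sup>'\<close> must contain \<open>t\<^sup>a\<close>,
  so \<open>t\<^sup>a\<^sup>'\<close> or \<open>t\<^sup>b\<^sup>'\<close> divides \<open>t\<^sup>a\<close>.\<close>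
lemma mono_diff_in_binomial_generating_set:
  fixes S :: "('e::finite, 'k::field) poly set"
  assumes fibre: "\<And>c. toric_deg E c = toric_deg E a \<Longrightarrow> c = a \<or> c = b"
    and disjoint: "\<And>e. Poly_Mapping.lookup a e = 0 \<or> Poly_Mapping.lookup b e = 0"
    and "a \<noteq> b"
    and S: "S \<subseteq> binomials \<inter> toric_ideal E"
    and "mono a - mono b \<in> rm.span S"
  shows "mono a - mono b \<in> S \<or> - (mono a - mono b) \<in> S"
proof -
  obtain T r where T: "finite T" "T \<subseteq> S" and sum: "mono a - mono b = (\<Sum>s\<in>T. r s * s)"
    using \<open>mono a - mono b \<in> rm.span S\<close> unfolding rm.span_explicit by blast
  have "Poly_Mapping.lookup (mono a - mono b :: ('e, 'k) poly) a = 1"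
    using \<open>a \<noteq> b\<close> by (simp add: mono_def lookup_minus lookup_single)
  then have "(\<Sum>s\<in>T. Poly_Mapping.lookup (r s * s) a) \<noteq> 0"
    unfolding sum lookup_sum by simp
  then obtain s where "s \<in> T" "a \<in> Poly_Mapping.keys (r s * s)"
    unfolding in_keys_iff by (rule sum.not_neutral_contains_not_neutral)
  then obtain y z where a: "a = y + z" and z: "z \<in> Poly_Mapping.keys s"
    using keys_mult[of "r s" s] by blast
  have "s \<in> binomials" "s \<in> toric_ideal E"
    using \<open>s \<in> T\<close> T S by auto
  then obtain a' b' where s: "s = mono a' - mono b'" "a' \<noteq> b'" "toric_deg E a' = toric_deg E b'"
    unfolding binomials_def mem_Collect_eq by (metis mono_diff_in_toric_ideal_iff)
  then have "z = a' \<or> z = b'"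
    using z by (auto simp: in_keys_iff mono_def lookup_minus lookup_single when_def split: if_splits)
  then have "s = mono a - mono b \<or> s = - (mono a - mono b)"
  proof
    assume "z = a'"
    then have "a' = a \<and> b' = b"
      using fibre_pair_factor[OF fibre disjoint s(2,3)] a by blast
    then show ?thesis
      using s(1) by blast
  next
    assume "z = b'"
    then have "b' = a \<and> a' = b"
      using fibre_pair_factor[OF fibre disjoint s(2)[symmetric] s(3)[symmetric]] a by blast
    then show ?thesis
      using s(1) by auto
  qed
  then show ?thesis
    using \<open>s \<in> T\<close> T by blast
qed

lemma uniform_partite_edge_meets_part:
  assumes "uniform_partite k E P" "i < k"
  shows "\<exists>v\<in>E e. v \<in> P i"
proof -
  have "card (E e \<inter> P i) = 1"
    using assms unfolding uniform_partite_def by blast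
  then show ?thesis
    by (metis card_1_singletonE Int_iff insertI1)
qed

theorem proposition4p6:
  fixes k :: nat
    and E :: "'e::finite \<Rightarrow> 'v::finite set"
    and P :: "nat \<Rightarrow> 'v set"
  assumes "hypergraph E"
    and "uniform_partite k E P"
    and "\<exists>i<k. \<forall>v\<in>P i. card {e. v \<in> E e} = 2"
  shows "unique_minimal_generating_set (graver_basis E :: (('e \<Rightarrow>\<^sub>0 nat) \<Rightarrow>\<^sub>0 'k::field) set)
           (toric_ideal E) binomials"
proof (rule unique_minimal_generating_setI[OF ideal_gen_graver_basis])
  obtain i where "i < k" and deg_two: "\<forall>v\<in>P i. card {e. v \<in> E e} = 2"
    using assms(3) by blast
  have "\<exists>v\<in>E e. card {e. v \<in> E e} = 2" for e
    using uniform_partite_edge_meets_part[OF assms(2) \<open>i < k\<close>] deg_two by blast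
  note fibre = primitive_pair_fibre[OF this]
  show "graver_basis E \<subseteq> (binomials :: ('e, 'k) poly set)"
    unfolding graver_basis_def binomials_def primitive_pair_def by blast
  fix g :: "('e, 'k) poly" and S
  assume "g \<in> graver_basis E" and S: "S \<subseteq> binomials \<inter> toric_ideal E" "g \<in> ideal_gen S"
  then obtain a b where g: "g = mono a - mono b" and prim: "primitive_pair E a b TYPE('k)"
    unfolding graver_basis_def by blast
  show "g \<in> S \<or> - g \<in> S"
    using mono_diff_in_binomial_generating_set[OF fibre[OF prim]
        primitive_pair_disjoint_support[OF prim] primitive_pairD(1)[OF prim] S(1)] S(2)
    by (simp add: g ideal_gen_eq_span)
qed

end
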